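(* Let $H$ be a homogeneous relation on a finite set $V$. Define $s:\mathcal P(V)\to\mathbb R$ by $s(X)=|\mathcal S_X|$ for nonempty $X\subseteq V$ and $s(\emptyset)=-|V|$. Then $s$ is submodular: for all $X,Y\subseteq V$, $s(X)+s(Y)\ge s(X\cup Y)+s(X\cap Y)$.
   Context: $V$ is a finite set and $\mathcal P(V)$ its power set. A reflectless triple is a triple $(x,y,z)\in V^3$ with $x\neq y$ and $x\neq z$, written $(x|yz)$. A homogeneous relation $H$ on $V$ is a set of reflectless triples (we write $H(s|xy)$ when $(s|xy)\in H$) such that for every $s\in V$ the binary relation $H_s=\{(x,y): H(s|xy)\}$ is an equivalence relation on $V\setminus\{s\}$. For $X\subseteq V$ and $z\in V\setminus X$, $z$ distinguishes (splits) $X$ if there exist $x,y\in X$ with not $H(z|xy)$. $\mathcal S_X$ denotes the set of all elements of $V\setminus X$ distinguishing $X$. *)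

theory Defs
  imports Main "HOL-Analysis.Analysis"
begin

text \<open>A reflectless triple (x|yz) over V: x, y, z in V with x \<noteq> y and x \<noteq> z.
  The triple (x|yz) is represented as (x, y, z).\<close>
definition reflectless :: "'a set \<Rightarrow> ('a \<times> 'a \<times> 'a) \<Rightarrow> bool" where
  "reflectless V t = (case t of (x, y, z) \<Rightarrow> x \<in> V \<and> y \<in> V \<and> z \<in> V \<and> x \<noteq> y \<and> x \<noteq> z)"

definition slice :: "('a \<times> 'a \<times> 'a) set \<Rightarrow> 'a \<Rightarrow> ('a \<times> 'a) set" where
  "slice H s = {(x, y). (s, x, y) \<in> H}"

definition homogeneous :: "'a set \<Rightarrow> ('a \<times> 'a \<times> 'a) set \<Rightarrow> bool" where
  "homogeneous V H = ((\<forall>t\<in>H. reflectless V t) \<and>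
     (\<forall>s\<in>V. equiv (V - {s}) (slice H s)))"

definition distinguishes :: "('a \<times> 'a \<times> 'a) set \<Rightarrow> 'a \<Rightarrow> 'a set \<Rightarrow> bool" where
  "distinguishes H z X = (\<exists>x\<in>X. \<exists>y\<in>X. (z, x, y) \<notin> H)"

definition splitters :: "'a set \<Rightarrow> ('a \<times> 'a \<times> 'a) set \<Rightarrow> 'a set \<Rightarrow> 'a set" where
  "splitters V H X = {z \<in> V - X. distinguishes H z X}"

definition sfun :: "'a set \<Rightarrow> ('a \<times> 'a \<times> 'a) set \<Rightarrow> 'a set \<Rightarrow> real" where
  "sfun V H X = (if X = {} then - real (card V) else real (card (splitters V H X)))"

end

theory Submission
  imports Defs
begin

text \<open>A splitter of X \<union> Y or of X \<inter> Y splits X or Y, and a common splitter of X \<union> Y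
  and X \<inter> Y splits both X and Y; inclusion-exclusion then gives submodularity of the
  number of splitters. The first claim needs a common element a of X and Y: if z splits
  neither X nor Y, every element of X \<union> Y is equivalent to a under H_z. The value -|V| at
  the empty set is low enough to absorb the case of disjoint X and Y.\<close>

lemma distinguishes_IntD:
  assumes "distinguishes H z (X \<inter> Y)"
  shows "distinguishes H z X" and "distinguishes H z Y"
  using assms unfolding distinguishes_def by auto

lemma not_distinguishes_Un:
  assumes hom: "homogeneous V H" and "z \<in> V" and a: "a \<in> X" "a \<in> Y"
    and nX: "\<not> distinguishes H z X" and nY: "\<not> distinguishes H z Y"
  shows "\<not> distinguishes H z (X \<union> Y)"
proof -
  have "equiv (V - {z}) (slice H z)"
    using hom \<open>z \<in> V\<close> unfolding homogeneous_def by blast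
  then have "sym (slice H z)" and "trans (slice H z)"
    by (auto elim: equivE)
  have sym: "(z, y, x) \<in> H" if "(z, x, y) \<in> H" for x y
    using symD[OF \<open>sym (slice H z)\<close>, of x y] that unfolding slice_def by simp
  have trans: "(z, x, w) \<in> H" if "(z, x, y) \<in> H" "(z, y, w) \<in> H" for x y w
    using transD[OF \<open>trans (slice H z)\<close>, of x y w] that unfolding slice_def by simp
  have to_a: "(z, a, x) \<in> H" if "x \<in> X \<union> Y" for x
    using that nX nY a unfolding distinguishes_def by blast
  have "(z, x, y) \<in> H" if "x \<in> X \<union> Y" "y \<in> X \<union> Y" for x y
    using trans[OF sym[OF to_a[OF that(1)]] to_a[OF that(2)]] .
  then show ?thesis
    unfolding distinguishes_def by blast
qed

lemma mem_splitters_iff: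
  "z \<in> splitters V H X \<longleftrightarrow> z \<in> V \<and> z \<notin> X \<and> distinguishes H z X"
  by (simp add: splitters_def)

lemma splitters_Un_Int_subset:
  assumes "homogeneous V H" and "X \<inter> Y \<noteq> {}"
  shows "splitters V H (X \<union> Y) \<union> splitters V H (X \<inter> Y) \<subseteq> splitters V H X \<union> splitters V H Y"
proof
  fix z
  assume z: "z \<in> splitters V H (X \<union> Y) \<union> splitters V H (X \<inter> Y)"
  show "z \<in> splitters V H X \<union> splitters V H Y"
  proof (cases "z \<in> splitters V H (X \<union> Y)")
    case True
    then have "z \<in> V" "z \<notin> X" "z \<notin> Y" "distinguishes H z (X \<union> Y)"
      by (simp_all add: mem_splitters_iff)
    moreover obtain a where "a \<in> X" "a \<in> Y"
      using assms(2) by blast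
    ultimately have "distinguishes H z X \<or> distinguishes H z Y"
      using not_distinguishes_Un[OF assms(1)] by metis
    with \<open>z \<in> V\<close> \<open>z \<notin> X\<close> \<open>z \<notin> Y\<close> show ?thesis
      by (auto simp: mem_splitters_iff)
  next
    case False
    with z have "z \<in> splitters V H (X \<inter> Y)"
      by simp
    then show ?thesis
      by (auto simp: mem_splitters_iff dest: distinguishes_IntD)
  qed
qed

lemma splitters_Un_Int_Int_subset:
  "splitters V H (X \<union> Y) \<inter> splitters V H (X \<inter> Y) \<subseteq> splitters V H X \<inter> splitters V H Y"
  by (auto simp: mem_splitters_iff dest: distinguishes_IntD)

lemma card_add_le_of_Un_Int_subset:
  assumes "finite A" "finite B" "finite C" "finite D"
    and "C \<union> D \<subseteq> A \<union> B" and "C \<inter> D \<subseteq> A \<inter> B"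
  shows "card C + card D \<le> card A + card B"
proof -
  have "card C + card D = card (C \<union> D) + card (C \<inter> D)"
    using assms(3,4) by (rule card_Un_Int)
  also have "\<dots> \<le> card (A \<union> B) + card (A \<inter> B)"
  proof (rule add_mono)
    show "card (C \<union> D) \<le> card (A \<union> B)"
      using assms(1,2,5) by (simp add: card_mono)
    show "card (C \<inter> D) \<le> card (A \<inter> B)"
      using assms(1,6) by (simp add: card_mono)
  qed
  also have "\<dots> = card A + card B"
    using assms(1,2) by (rule card_Un_Int[symmetric])
  finally show ?thesis .
qed

lemma splitters_subset: "splitters V H X \<subseteq> V"
  by (auto simp: mem_splitters_iff)

lemma card_splitters_le: "finite V \<Longrightarrow> card (splitters V H X) \<le> card V"
  by (simp add: card_mono splitters_subset)

lemma card_splitters_submodular: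
  assumes "finite V" and "homogeneous V H" and "X \<inter> Y \<noteq> {}"
  shows "card (splitters V H (X \<union> Y)) + card (splitters V H (X \<inter> Y))
           \<le> card (splitters V H X) + card (splitters V H Y)"
proof -
  have fin: "finite (splitters V H A)" for A
    using splitters_subset \<open>finite V\<close> by (rule finite_subset)
  show ?thesis
    using card_add_le_of_Un_Int_subset[OF fin fin fin fin
        splitters_Un_Int_subset[OF assms(2,3)] splitters_Un_Int_Int_subset] .
qed

lemma sfun_nonempty: "X \<noteq> {} \<Longrightarrow> sfun V H X = real (card (splitters V H X))"
  by (simp add: sfun_def)

lemma sfun_empty: "sfun V H {} = - real (card V)"
  by (simp add: sfun_def)

theorem mainTheorem6:
  fixes V :: "'a set" and H :: "('a \<times> 'a \<times> 'a) set"
  assumes "finite V" and "homogeneous V H"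
  shows "\<forall>X Y. X \<subseteq> V \<longrightarrow> Y \<subseteq> V \<longrightarrow>
           sfun V H X + sfun V H Y \<ge> sfun V H (X \<union> Y) + sfun V H (X \<inter> Y)"
proof (intro allI impI)
  fix X Y :: "'a set"
  consider "X = {} \<or> Y = {}" | "X \<noteq> {}" "Y \<noteq> {}" "X \<inter> Y = {}" | "X \<inter> Y \<noteq> {}"
    by blast
  then show "sfun V H X + sfun V H Y \<ge> sfun V H (X \<union> Y) + sfun V H (X \<inter> Y)"
  proof cases
    case 1
    then show ?thesis by (auto simp: sfun_empty)
  next
    case 2
    then have "X \<union> Y \<noteq> {}" by blast
    show ?thesis
      using card_splitters_le[OF \<open>finite V\<close>, of H "X \<union> Y"]
      unfolding sfun_nonempty[OF 2(1)] sfun_nonempty[OF 2(2)] sfun_nonempty[OF \<open>X \<union> Y \<noteq> {}\<close>]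
        2(3) sfun_empty
      by linarith
  next
    case 3
    then have "X \<noteq> {}" "Y \<noteq> {}" "X \<union> Y \<noteq> {}" by auto
    then show ?thesis
      using card_splitters_submodular[OF assms 3]
      unfolding sfun_nonempty[OF \<open>X \<noteq> {}\<close>] sfun_nonempty[OF \<open>Y \<noteq> {}\<close>]
        sfun_nonempty[OF \<open>X \<union> Y \<noteq> {}\<close>] sfun_nonempty[OF 3]
      by linarith
  qed
qed

end
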